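(* For every $n\geq 4$ there exist a convex $n$-gon $Q$ (with vertices $p_1,\dots,p_n$ in cyclic order, $p_i$ labeled $i$) and vectors $x_d\in X_Q$ for every $d\in\mathrm{Diag}_n$ such that $\langle f_d^\perp, x_{d'}\rangle>0$ whenever $d\rhd d'$.
   Context: Let $Q$ be a convex $n$-gon in $\mathbb{R}^2$ with vertices $p_1,\dots,p_n$ in cyclic order; identify $p_i$ with label $i$, so triangulations of $Q$ (using only vertices of $Q$) are identified with elements of $\mathcal{T}_n$ (each triangulation identified with its set of diagonals) and diagonals with elements of $\mathrm{Diag}_n=\{\{i,j\}\subseteq[n]: i-j\not\equiv\pm1 \pmod n\}$. Two diagonals cross if they meet in the interior of $Q$. Let $X_Q$ be the space of formal combinations $\sum_{p\in V(Q)} c_p\cdot p$ with $\sum_p c_p=0$ and $\sum_p c_p p=0$ in $\mathbb{R}^2$; let $X_Q^*$ be the space of functions $V(Q)\to\mathbb{R}$ modulo restrictions of affine functions $\mathbb{R}^2\to\mathbb{R}$, with pairing $\langle[\psi],\sum_p c_p\cdot p\rangle=\sum_p c_p\psi(p)$. For a triangulation $T$ let $v_T=(\operatorname{area}(Q_{T,p}))_{p\in V(Q)}$ where $Q_{T,p}$ is the union of the triangles of $T$ having $p$ as a vertex. The secondary polytope $\Sigma_Q$ is the convex hull of the $v_T$, translated to lie in $X_Q$. It is known (Gelfand–Kapranov–Zelevinsky) that $\Sigma_Q$ is a full-dimensional polytope in the $(n-3)$-dimensional space $X_Q$ realizing the associahedron: its vertices are exactly the points $v_T$, $T\in\mathcal{T}_n$;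 its facets are $f_d$, $d\in\mathrm{Diag}_n$, where $f_d$ contains $v_T$ iff $d\in T$; and an outward normal of $f_d$ is $f_d^\perp=[\psi_d]$, where $\psi_d=\min(\ell_d,0)$ restricted to $V(Q)$ and $\ell_d$ is any nonzero affine function vanishing at both endpoints of $d$. Two facets $f_d,f_{d'}$ share a vertex iff $d,d'$ do not cross. Swapping relation: for $\{i,j\},\{i',j'\}\in\mathrm{Diag}_n$ written with $i<j$ and $i'<j'$, write $\{i,j\}\rhd\{i',j'\}$ if either $\{i,j\}$ and $\{i',j'\}$ do not cross (in particular $d\rhd d$ for every $d$), or $i'<i<j'<j<n$ and $j'-i>1$. *)

theory Defs
  imports Main "HOL.Real"
begin

definition orient :: "real \<times> real \<Rightarrow> real \<times> real \<Rightarrow> real \<times> real \<Rightarrow> real" where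
  "orient a b c = (fst b - fst a) * (snd c - snd a) - (snd b - snd a) * (fst c - fst a)"

text \<open>p 1, ..., p n are the vertices of a convex n-gon in cyclic order
  (counterclockwise or clockwise): every index-ordered triple has the same strict orientation.\<close>
definition convex_ngon :: "nat \<Rightarrow> (nat \<Rightarrow> real \<times> real) \<Rightarrow> bool" where
  "convex_ngon n p \<longleftrightarrow>
     (\<forall>i j k. 1 \<le> i \<longrightarrow> i < j \<longrightarrow> j < k \<longrightarrow> k \<le> n \<longrightarrow> orient (p i) (p j) (p k) > 0) \<or>
     (\<forall>i j k. 1 \<le> i \<longrightarrow> i < j \<longrightarrow> j < k \<longrightarrow> k \<le> n \<longrightarrow> orient (p i) (p j) (p k) < 0)"

definition is_diag :: "nat \<Rightarrow> nat \<Rightarrow> nat \<Rightarrow> bool" where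
  "is_diag n i j \<longleftrightarrow> 1 \<le> i \<and> i < j \<and> j \<le> n \<and>
     i mod n \<noteq> j mod n \<and> (i + 1) mod n \<noteq> j mod n \<and> (j + 1) mod n \<noteq> i mod n"

text \<open>Diagonals {i,j}, {i',j'} (i<j, i'<j') of a convex polygon cross iff their endpoints
  strictly interleave.\<close>
definition crosses :: "nat \<Rightarrow> nat \<Rightarrow> nat \<Rightarrow> nat \<Rightarrow> bool" where
  "crosses i j i' j' \<longleftrightarrow> (i < i' \<and> i' < j \<and> j < j') \<or> (i' < i \<and> i < j' \<and> j' < j)"

definition swaps :: "nat \<Rightarrow> nat \<Rightarrow> nat \<Rightarrow> nat \<Rightarrow> nat \<Rightarrow> bool" where
  "swaps n i j i' j' \<longleftrightarrow> \<not> crosses i j i' j' \<or>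
     (i' < i \<and> i < j' \<and> j' < j \<and> j < n \<and> j' - i > 1)"

text \<open>Membership of a formal combination \<Sum> c_k p_k in X_Q.\<close>
definition in_XQ :: "nat \<Rightarrow> (nat \<Rightarrow> real \<times> real) \<Rightarrow> (nat \<Rightarrow> real) \<Rightarrow> bool" where
  "in_XQ n p c \<longleftrightarrow> (\<Sum>k=1..n. c k) = 0 \<and> (\<Sum>k=1..n. c k * fst (p k)) = 0
      \<and> (\<Sum>k=1..n. c k * snd (p k)) = 0"

text \<open>psi_d = min(l_d, 0) on the vertices, with the nonzero affine function
  l_d(x) = orient (p i) (p j) x vanishing at both endpoints of d = {i,j}.\<close>
definition psi :: "(nat \<Rightarrow> real \<times> real) \<Rightarrow> nat \<Rightarrow> nat \<Rightarrow> nat \<Rightarrow> real" where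
  "psi p i j k = min (orient (p i) (p j) (p k)) 0"

text \<open>The pairing < f_d^perp, \<Sum> c_k p_k > = \<Sum> c_k psi_d(p_k).\<close>
definition pairing :: "nat \<Rightarrow> (nat \<Rightarrow> real \<times> real) \<Rightarrow> nat \<Rightarrow> nat \<Rightarrow> (nat \<Rightarrow> real) \<Rightarrow> real" where
  "pairing n p i j c = (\<Sum>k=1..n. c k * psi p i j k)"

end

theory Submission
  imports Defs
begin

text \<open>Put the vertices on the parabola \<open>y = x\<^sup>2\<close> at the abscissae \<open>-(1/2)\<^sup>k\<close> for
  \<open>k < n\<close> and \<open>1\<close> for \<open>k = n\<close>.  For the diagonal \<open>{a,b}\<close> take the affine dependency
  with coefficient \<open>-L\<close> at \<open>b - 1\<close> and \<open>-1\<close> at every vertex other than \<open>a\<close>, \<open>b\<close> and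
  one auxiliary vertex \<open>h\<close> outside \<open>[a,b]\<close>; the coefficients at \<open>a\<close>, \<open>b\<close>, \<open>h\<close> are then
  forced, and for large \<open>L\<close> the coefficient at \<open>h\<close> is negative and the one at \<open>b\<close> is
  at most \<open>L\<close>.  Pairing with \<open>\<psi>\<^sub>d = min \<ell>\<^sub>d 0\<close> only sees the vertices strictly
  between the endpoints of \<open>d\<close>.  If neither \<open>a\<close> nor \<open>b\<close> lies there, every term is
  positive; if \<open>{a,b}\<close> is nested in \<open>d\<close>, the dependency annihilates \<open>\<ell>\<^sub>d\<close>, so one may
  pair with \<open>-max \<ell>\<^sub>d 0\<close> instead; in the crossing case allowed by the swapping
  relation, the terms at \<open>b - 1\<close> and \<open>b\<close> add up to a positive number because the
  fast decay of the abscissae puts vertex \<open>b - 1\<close> farther from the line through \<open>d\<close>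
  than vertex \<open>b\<close>.\<close>

section \<open>Orientation and affine dependencies\<close>

lemma orient_swap: "orient a c b = - orient a b c"
  unfolding orient_def by (simp add: algebra_simps)

lemma orient_rotate: "orient a b c = orient b c a"
  unfolding orient_def by (simp add: algebra_simps)

lemma orient_degenerate [simp]: "orient a b a = 0" "orient a b b = 0"
  unfolding orient_def by (simp_all add: algebra_simps)

lemma orient_affine:
  "orient P Q X = ((snd Q - snd P) * fst P - (fst Q - fst P) * snd P)
     + (snd P - snd Q) * fst X + (fst Q - fst P) * snd X"
  unfolding orient_def by (simp add: algebra_simps)

lemma sum_mult_affine:
  "(\<Sum>k\<in>S. c k * (\<alpha> + \<beta> * u k + \<gamma> * v k))
     = \<alpha> * sum c S + \<beta> * (\<Sum>k\<in>S. c k * u k) + \<gamma> * (\<Sum>k\<in>S. c k * v k)"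
  for c u v :: "'a \<Rightarrow> real"
  by (simp add: algebra_simps sum.distrib sum_distrib_left)

lemma in_XQ_sum_orient_eq_0:
  assumes "in_XQ n p c"
  shows "(\<Sum>k=1..n. c k * orient P Q (p k)) = 0"
  using assms unfolding in_XQ_def orient_affine[of P Q] sum_mult_affine by simp

lemma in_XQ_if_sum_orient_eq_0:
  assumes den: "orient P Q R \<noteq> 0"
    and sum0: "sum c {1..n} = 0"
    and sumQ: "(\<Sum>k=1..n. c k * orient P Q (p k)) = 0"
    and sumR: "(\<Sum>k=1..n. c k * orient P R (p k)) = 0"
  shows "in_XQ n p c"
proof -
  have "orient P Q R * fst (p k) = orient P Q R * fst P + (fst R - fst P) * orient P Q (p k)
          + (fst P - fst Q) * orient P R (p k)"
   and "orient P Q R * snd (p k) = orient P Q R * snd P + (snd R - snd P) * orient P Q (p k)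
          + (snd P - snd Q) * orient P R (p k)" for k
    unfolding orient_def by (simp_all add: algebra_simps)
  then have "(\<Sum>k=1..n. c k * (orient P Q R * fst (p k))) = 0"
    and "(\<Sum>k=1..n. c k * (orient P Q R * snd (p k))) = 0"
    by (simp_all only: sum_mult_affine sum0 sumQ sumR)
  then show ?thesis
    using sum0 den unfolding in_XQ_def
    by (simp add: mult.left_commute[of _ "orient P Q R"] sum_distrib_left[symmetric])
qed

lemma sum_split_three:
  assumes "finite S" "a \<in> S" "b \<in> S" "h \<in> S" "distinct [a, b, h]"
  shows "sum f S = f a + f b + f h + sum f (S - {a, b, h})"
  using assms sum.subset_diff[of "{a, b, h}" S f] by (simp add: add.commute add.left_commute)

lemma in_XQ_coeff_orient:
  assumes "in_XQ n p c" "a \<in> {1..n}" "b \<in> {1..n}" "h \<in> {1..n}" "distinct [a, b, h]"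
  shows "c h * orient (p a) (p b) (p h)
           = - (\<Sum>k\<in>{1..n} - {a, b, h}. c k * orient (p a) (p b) (p k))"
proof -
  have "0 = (\<Sum>k=1..n. c k * orient (p a) (p b) (p k))"
    using in_XQ_sum_orient_eq_0[OF assms(1)] by simp
  also have "\<dots> = c h * orient (p a) (p b) (p h)
      + (\<Sum>k\<in>{1..n} - {a, b, h}. c k * orient (p a) (p b) (p k))"
    using assms(2-) by (subst sum_split_three[of "{1..n}" a b h]) simp_all
  finally show ?thesis by linarith
qed

lemma in_XQ_extend:
  assumes "a \<in> {1..n}" "b \<in> {1..n}" "h \<in> {1..n}" "distinct [a, b, h]"
    and den: "orient (p a) (p b) (p h) \<noteq> 0"
  shows "\<exists>c. in_XQ n p c \<and> (\<forall>k\<in>{1..n} - {a, b, h}. c k = w k)"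
proof -
  let ?rest = "{1..n} - {a, b, h}"
  \<comment> \<open>\<open>cb\<close> and \<open>ch\<close> are forced by the affine functions vanishing at \<open>a, h\<close> and at \<open>a, b\<close>.\<close>
  define cb where "cb = (\<Sum>k\<in>?rest. w k * orient (p a) (p h) (p k)) / orient (p a) (p b) (p h)"
  define ch where "ch = - (\<Sum>k\<in>?rest. w k * orient (p a) (p b) (p k)) / orient (p a) (p b) (p h)"
  define c where "c k = (if k = a then - (cb + ch + sum w ?rest) else if k = b then cb
    else if k = h then ch else w k)" for k
  have split: "(\<Sum>k=1..n. c k * f k) = c a * f a + c b * f b + c h * f h + (\<Sum>k\<in>?rest. w k * f k)"
    for f :: "nat \<Rightarrow> real"
    using assms by (subst sum_split_three[of "{1..n}" a b h]) (simp_all add: c_def)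
  have "in_XQ n p c"
  proof (rule in_XQ_if_sum_orient_eq_0[OF den])
    show "sum c {1..n} = 0"
      using split[of "\<lambda>_. 1"] assms(4) by (simp add: c_def)
    show "(\<Sum>k=1..n. c k * orient (p a) (p b) (p k)) = 0"
      using split assms(4) den by (simp add: c_def ch_def)
    show "(\<Sum>k=1..n. c k * orient (p a) (p h) (p k)) = 0"
      using split assms(4) den orient_swap[of "p a" "p b" "p h"] by (simp add: c_def cb_def)
  qed
  moreover have "\<forall>k\<in>?rest. c k = w k"
    by (simp add: c_def)
  ultimately show ?thesis by blast
qed

section \<open>Pairings over a counterclockwise polygon\<close>

definition ccw_polygon :: "nat \<Rightarrow> (nat \<Rightarrow> real \<times> real) \<Rightarrow> bool" where
  "ccw_polygon n p \<longleftrightarrow>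
     (\<forall>i j k. 1 \<le> i \<longrightarrow> i < j \<longrightarrow> j < k \<longrightarrow> k \<le> n \<longrightarrow> orient (p i) (p j) (p k) > 0)"

lemma convex_ngon_if_ccw: "ccw_polygon n p \<Longrightarrow> convex_ngon n p"
  unfolding ccw_polygon_def convex_ngon_def by blast

lemma ccw_orient_pos:
  "ccw_polygon n p \<Longrightarrow> 1 \<le> i \<Longrightarrow> i < j \<Longrightarrow> j < k \<Longrightarrow> k \<le> n \<Longrightarrow> orient (p i) (p j) (p k) > 0"
  unfolding ccw_polygon_def by blast

lemma ccw_orient_between:
  assumes "ccw_polygon n p" "1 \<le> i" "i < k" "k < j" "j \<le> n"
  shows "orient (p i) (p j) (p k) < 0"
  using ccw_orient_pos[OF assms] orient_swap[of "p i" "p j" "p k"] by simp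

lemma ccw_orient_outside:
  assumes "ccw_polygon n p" "1 \<le> i" "i < j" "j \<le> n" "1 \<le> k" "k \<le> n" "k < i \<or> j < k"
  shows "orient (p i) (p j) (p k) > 0"
  using assms ccw_orient_pos[of n p k i j] ccw_orient_pos[of n p i j k]
    orient_rotate[of "p k" "p i" "p j"] by auto

lemma ccw_orient_nonneg:
  assumes "ccw_polygon n p" "1 \<le> i" "i < j" "j \<le> n" "1 \<le> k" "k \<le> n" "k \<le> i \<or> j \<le> k"
  shows "orient (p i) (p j) (p k) \<ge> 0"
  using assms ccw_orient_outside[OF assms(1-6)] by (cases "k = i \<or> k = j") auto

lemma psi_between:
  "ccw_polygon n p \<Longrightarrow> 1 \<le> i \<Longrightarrow> i < k \<Longrightarrow> k < j \<Longrightarrow> j \<le> n \<Longrightarrow> psi p i j k < 0"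
  unfolding psi_def using ccw_orient_between by fastforce

lemma psi_outside:
  assumes "ccw_polygon n p" "1 \<le> i" "i < j" "j \<le> n" "k \<in> {1..n}" "k \<le> i \<or> j \<le> k"
  shows "psi p i j k = 0"
  using ccw_orient_nonneg[of n p i j k] assms unfolding psi_def by simp

lemma pairing_term_nonneg:
  assumes "ccw_polygon n p" "1 \<le> i" "i < j" "j \<le> n" "k \<in> {1..n}"
    and "i < k \<Longrightarrow> k < j \<Longrightarrow> c k \<le> 0"
  shows "0 \<le> c k * psi p i j k"
proof (cases "i < k \<and> k < j")
  case True
  then show ?thesis
    using assms psi_between[OF assms(1)] by (simp add: mult_nonpos_nonpos less_imp_le)
next
  case False
  then have "k \<le> i \<or> j \<le> k"
    by auto
  then show ?thesis
    using psi_outside[OF assms(1-5)] by simp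
qed

lemma pairing_pos_if_neg_between:
  assumes ccw: "ccw_polygon n p" and ij: "1 \<le> i" "i + 2 \<le> j" "j \<le> n"
    and neg: "\<And>k. i < k \<Longrightarrow> k < j \<Longrightarrow> c k < 0"
  shows "0 < pairing n p i j c"
  unfolding pairing_def
proof (rule sum_pos2)
  show "0 \<le> c k * psi p i j k" if "k \<in> {1..n}" for k
    using pairing_term_nonneg[OF ccw _ _ _ that] neg ij by (simp add: less_imp_le)
  show "0 < c (i + 1) * psi p i j (i + 1)"
    using neg psi_between[OF ccw] ij by (simp add: mult_neg_neg)
qed (use ij in auto)

lemma pairing_pos_if_neg_outside:
  assumes ccw: "ccw_polygon n p" and c: "in_XQ n p c"
    and ij: "1 \<le> i" "i < j" "j \<le> n" "\<not> (i = 1 \<and> j = n)"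
    and neg: "\<And>k. k \<in> {1..n} \<Longrightarrow> k < i \<or> j < k \<Longrightarrow> c k < 0"
  shows "0 < pairing n p i j c"
proof -
  let ?o = "\<lambda>k. orient (p i) (p j) (p k)"
  have "pairing n p i j c = (\<Sum>k=1..n. c k * ?o k) + (\<Sum>k=1..n. - c k * max (?o k) 0)"
    unfolding pairing_def psi_def sum.distrib[symmetric]
    by (rule sum.cong) (auto simp: min_def max_def algebra_simps)
  also have "\<dots> = (\<Sum>k=1..n. - c k * max (?o k) 0)"
    using in_XQ_sum_orient_eq_0[OF c] by simp
  also have "\<dots> > 0"
  proof (rule sum_pos2)
    show "0 \<le> - c k * max (?o k) 0" if "k \<in> {1..n}" for k
    proof (cases "k < i \<or> j < k")
      case True
      then show ?thesis
        using neg that by (simp add: mult_nonpos_nonneg less_imp_le)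
    next
      case False
      then have "?o k \<le> 0"
        using ccw_orient_between[OF ccw, of i k j] ij by (cases "k = i \<or> k = j") auto
      then show ?thesis
        by simp
    qed
    define k0 where "k0 = (if j < n then j + 1 else 1)"
    have k0: "k0 \<in> {1..n}" "k0 < i \<or> j < k0"
      using ij unfolding k0_def by auto
    then show "0 < - c k0 * max (?o k0) 0"
      using neg ccw_orient_outside[OF ccw, of i j k0] ij by (simp add: mult_neg_pos)
    show "k0 \<in> {1..n}"
      using k0 by simp
  qed simp
  finally show ?thesis .
qed

lemma pairing_pos_crossing:
  assumes ccw: "ccw_polygon n p" and ij: "1 \<le> i" "i < b - 1" "b < j" "j \<le> n"
    and neg: "\<And>k. i < k \<Longrightarrow> k < j \<Longrightarrow> k \<noteq> b \<Longrightarrow> c k < 0"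
    and dominated: "c b + c (b - 1) \<le> 0"
    and bend: "orient (p i) (p j) (p (b - 1)) < orient (p i) (p j) (p b)"
  shows "0 < pairing n p i j c"
proof -
  let ?f = "\<lambda>k. c k * psi p i j k"
  have o_b: "orient (p i) (p j) (p b) < 0"
    using ccw_orient_between[OF ccw] ij by simp
  have "c (b - 1) < 0"
    using neg ij by simp
  then have "c (b - 1) * (orient (p i) (p j) (p (b - 1)) - orient (p i) (p j) (p b)) > 0"
    using bend by (simp add: mult_neg_neg)
  moreover have "c b * orient (p i) (p j) (p b) \<ge> - c (b - 1) * orient (p i) (p j) (p b)"
    using mult_right_mono_neg[of "c b" "- c (b - 1)", OF _ less_imp_le[OF o_b]] dominated
    by simp
  ultimately have "0 < ?f (b - 1) + ?f b"
    using o_b bend unfolding psi_def by (simp add: algebra_simps)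
  also have "\<dots> = sum ?f {b - 1, b}"
    using ij by simp
  also have "\<dots> \<le> sum ?f {1..n}"
  proof (rule sum_mono2)
    show "0 \<le> ?f k" if "k \<in> {1..n} - {b - 1, b}" for k
      using pairing_term_nonneg[OF ccw, of i j k c] that neg ij by (simp add: less_imp_le)
  qed (use ij in auto)
  finally show ?thesis
    unfolding pairing_def .
qed

section \<open>Vertices on a parabola\<close>

lemma orient_parabola: "orient (x, x\<^sup>2) (y, y\<^sup>2) (z, z\<^sup>2) = (y - x) * (z - x) * (z - y)"
  unfolding orient_def by (simp add: algebra_simps power2_eq_square)

lemma orient_parabola_diff:
  "orient (x, x\<^sup>2) (y, y\<^sup>2) (z, z\<^sup>2) - orient (x, x\<^sup>2) (y', y'\<^sup>2) (z, z\<^sup>2)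
     = (z - x) * (y - y') * (x + z - y - y')"
  unfolding orient_parabola by (simp add: algebra_simps)

definition abscissa :: "nat \<Rightarrow> nat \<Rightarrow> real" where
  "abscissa n k = (if k = n then 1 else - ((1/2) ^ k))"

definition vertex :: "nat \<Rightarrow> nat \<Rightarrow> real \<times> real" where
  "vertex n k = (abscissa n k, (abscissa n k)\<^sup>2)"

lemma abscissa_less: "k < l \<Longrightarrow> l \<le> n \<Longrightarrow> abscissa n k < abscissa n l"
  unfolding abscissa_def by (auto intro: power_strict_decreasing less_trans[of "-1" 0])

lemma abscissa_neg: "k < n \<Longrightarrow> abscissa n k < 0"
  unfolding abscissa_def by simp

lemma abscissa_ge: "1 \<le> k \<Longrightarrow> - (1/2) \<le> abscissa n k"
  unfolding abscissa_def using power_decreasing[of 1 k "1/2 :: real"] by auto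

lemma ccw_polygon_vertex: "ccw_polygon n (vertex n)"
  unfolding ccw_polygon_def vertex_def orient_parabola by (auto intro!: mult_pos_pos abscissa_less)

lemma orient_vertex_diff:
  "orient (vertex n a) (vertex n b) (vertex n h) - orient (vertex n a) (vertex n b') (vertex n h)
     = (abscissa n h - abscissa n a) * (abscissa n b - abscissa n b')
       * (abscissa n a + abscissa n h - abscissa n b - abscissa n b')"
  unfolding vertex_def by (rule orient_parabola_diff)

lemma orient_vertex_mono_before:
  assumes "h < a" "a < b - 1" "b \<le> n"
  shows "orient (vertex n a) (vertex n (b - 1)) (vertex n h) < orient (vertex n a) (vertex n b) (vertex n h)"
proof -
  have "abscissa n h < abscissa n a" "abscissa n (b - 1) < abscissa n b"
    "abscissa n h < abscissa n (b - 1)" "abscissa n a < abscissa n b"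
    using assms by (auto intro: abscissa_less)
  then have "0 < (abscissa n a - abscissa n h) * (abscissa n b - abscissa n (b - 1))
      * (abscissa n b + abscissa n (b - 1) - abscissa n a - abscissa n h)"
    by (intro mult_pos_pos) simp_all
  then show ?thesis
    using orient_vertex_diff[of n a b h "b - 1"] by (simp add: algebra_simps)
qed

lemma orient_vertex_mono_last:
  assumes "1 \<le> a" "a < b - 1" "b < n"
  shows "orient (vertex n a) (vertex n (b - 1)) (vertex n n) < orient (vertex n a) (vertex n b) (vertex n n)"
proof -
  have "abscissa n a < abscissa n n" "abscissa n (b - 1) < abscissa n b"
    using assms by (auto intro: abscissa_less)
  moreover have "abscissa n (b - 1) < 0" "abscissa n b < 0" "- (1/2) \<le> abscissa n a"
    using assms by (auto intro: abscissa_neg abscissa_ge)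
  ultimately have "0 < (abscissa n n - abscissa n a) * (abscissa n b - abscissa n (b - 1))
      * (abscissa n a + abscissa n n - abscissa n b - abscissa n (b - 1))"
    by (intro mult_pos_pos) (simp_all add: abscissa_def)
  then show ?thesis
    using orient_vertex_diff[of n a b n "b - 1"] by simp
qed

lemma abscissa_sum_less:
  assumes "1 \<le> i" "i < b - 1" "b < j" "j < n"
  shows "abscissa n i + abscissa n j < abscissa n (b - 1) + abscissa n b"
proof -
  define m where "m = b - 2"
  have b: "b = m + 2" and "i \<le> m"
    using assms unfolding m_def by linarith+
  have "(1/2 :: real) ^ m \<le> (1/2) ^ i"
    using \<open>i \<le> m\<close> by (simp add: power_decreasing)
  moreover have "(1/2 :: real) ^ j > 0" "(1/2 :: real) ^ m > 0"
    by simp_all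
  moreover have "abscissa n i + abscissa n j = - ((1/2) ^ i) - (1/2) ^ j"
    and "abscissa n (b - 1) + abscissa n b = - (3/4) * (1/2) ^ m"
    using assms unfolding abscissa_def b by (simp_all add: power_add)
  ultimately show ?thesis
    by linarith
qed

lemma orient_vertex_antimono_inner:
  assumes "1 \<le> i" "i < b - 1" "b < j" "j < n"
  shows "orient (vertex n i) (vertex n b) (vertex n j) < orient (vertex n i) (vertex n (b - 1)) (vertex n j)"
proof -
  have "abscissa n i < abscissa n j" "abscissa n (b - 1) < abscissa n b"
    using assms by (auto intro: abscissa_less)
  then have "0 < (abscissa n j - abscissa n i) * (abscissa n b - abscissa n (b - 1))
      * (abscissa n (b - 1) + abscissa n b - abscissa n i - abscissa n j)"
    using abscissa_sum_less[OF assms] by (intro mult_pos_pos) simp_all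
  then show ?thesis
    using orient_vertex_diff[of n i "b - 1" j b] by (simp add: algebra_simps)
qed

section \<open>Separating vectors\<close>

lemma ex_pos_mult_gt:
  fixes \<alpha> \<alpha>' \<beta> \<beta>' :: real
  assumes "0 < \<alpha>" "0 < \<alpha>'"
  shows "\<exists>L>0. \<beta> < L * \<alpha> \<and> \<beta>' < L * \<alpha>'"
proof (intro exI conjI)
  let ?L = "max 0 (max (\<beta> / \<alpha>) (\<beta>' / \<alpha>')) + 1"
  show "0 < ?L" "\<beta> < ?L * \<alpha>" "\<beta>' < ?L * \<alpha>'"
    using assms by (simp_all add: pos_divide_less_eq[symmetric])
qed

lemma sum_remove_weighted:
  fixes c g :: "'a \<Rightarrow> real"
  assumes "finite S" "m \<in> S" "\<forall>k\<in>S. c k = (if k = m then - L else - 1)"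
  shows "(\<Sum>k\<in>S. c k * g k) = - L * g m - (\<Sum>k\<in>S - {m}. g k)"
proof -
  have "(\<Sum>k\<in>S - {m}. c k * g k) = (\<Sum>k\<in>S - {m}. - g k)"
    using assms(3) by (intro sum.cong) auto
  then show ?thesis
    using assms sum.remove[OF assms(1,2), of "\<lambda>k. c k * g k"] by (simp add: sum_negf)
qed

lemma separating_vector_exists_ccw:
  assumes ccw: "ccw_polygon n p" and ab: "1 \<le> a" "a + 2 \<le> b" "b \<le> n"
    and h: "h \<in> {1..n}" "h < a \<or> b < h"
    and step_mono: "orient (p a) (p (b - 1)) (p h) < orient (p a) (p b) (p h)"
  shows "\<exists>c. in_XQ n p c \<and> (\<forall>k\<in>{1..n} - {a, b}. c k < 0) \<and> c b + c (b - 1) \<le> 0"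
proof -
  let ?o = "\<lambda>x y z. orient (p x) (p y) (p z)"
  define rest where "rest = {1..n} - {a, b, h}"
  have abh: "a \<in> {1..n}" "b \<in> {1..n}" "h \<in> {1..n}" "distinct [a, b, h]" and b1: "b - 1 \<in> rest"
    and rest_swap: "rest = {1..n} - {a, h, b}"
    using ab h by (auto simp: rest_def)
  have abh_pos: "?o a b h > 0"
    using h ab ccw_orient_outside[OF ccw, of a b h] by simp
  have step_pos: "?o a (b - 1) b > 0"
    using ab ccw_orient_pos[OF ccw, of a "b - 1" b] by simp
  obtain L where L: "L > 0" "(\<Sum>k\<in>rest - {b - 1}. ?o a b k) < L * ?o a (b - 1) b"
      "- (\<Sum>k\<in>rest - {b - 1}. ?o a h k) < L * (?o a b h - ?o a (b - 1) h)"
    using ex_pos_mult_gt[OF step_pos, of "?o a b h - ?o a (b - 1) h"] step_mono by auto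
  obtain c where c: "in_XQ n p c" and c_rest: "\<forall>k\<in>rest. c k = (if k = b - 1 then - L else - 1)"
    using in_XQ_extend[OF abh less_imp_neq[OF abh_pos, symmetric], of "\<lambda>k. if k = b - 1 then - L else - 1"]
    unfolding rest_def by blast
  have sum_rest: "(\<Sum>k\<in>rest. c k * g k) = - L * g (b - 1) - (\<Sum>k\<in>rest - {b - 1}. g k)" for g
    using sum_remove_weighted[OF _ b1 c_rest] by (simp add: rest_def)
  have "c h * ?o a b h = - (\<Sum>k\<in>rest. c k * ?o a b k)"
    using in_XQ_coeff_orient[OF c abh] unfolding rest_def .
  also have "\<dots> = - L * ?o a (b - 1) b + (\<Sum>k\<in>rest - {b - 1}. ?o a b k)"
    using orient_swap[of "p a" "p (b - 1)" "p b"] by (simp add: sum_rest)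
  finally have "c h * ?o a b h < 0"
    using L by linarith
  then have "c h < 0"
    using abh_pos by (simp add: mult_less_0_iff)
  have "- (c b * ?o a b h) = - (\<Sum>k\<in>rest. c k * ?o a h k)"
    using in_XQ_coeff_orient[OF c, of a h b] abh orient_swap[of "p a" "p b" "p h"]
    unfolding rest_swap by simp
  also have "\<dots> = - L * ?o a (b - 1) h + (\<Sum>k\<in>rest - {b - 1}. ?o a h k)"
    using orient_swap[of "p a" "p (b - 1)" "p h"] by (simp add: sum_rest)
  finally have "c b * ?o a b h < L * ?o a b h"
    using L by (simp add: algebra_simps)
  then have "c b + c (b - 1) < 0"
    using abh_pos c_rest b1 by simp
  moreover have "c k < 0" if "k \<in> {1..n} - {a, b}" for k
    using that \<open>c h < 0\<close> c_rest L by (cases "k = h") (auto simp: rest_def)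
  ultimately show ?thesis
    using c by (intro exI[of _ c]) auto
qed

lemma separating_vector_exists:
  assumes ab: "1 \<le> a" "a + 2 \<le> b" "b \<le> n" "\<not> (a = 1 \<and> b = n)"
  shows "\<exists>c. in_XQ n (vertex n) c \<and> (\<forall>k\<in>{1..n} - {a, b}. c k < 0) \<and> c b + c (b - 1) \<le> 0"
proof (cases "b < n")
  case True
  then show ?thesis
    using separating_vector_exists_ccw[OF ccw_polygon_vertex ab(1-3), of n]
      orient_vertex_mono_last[of a b n] ab by simp
next
  case False
  then show ?thesis
    using separating_vector_exists_ccw[OF ccw_polygon_vertex ab(1-3), of 1]
      orient_vertex_mono_before[of 1 a b n] ab by simp
qed

lemma is_diag_bounds:
  assumes "is_diag n i j"
  shows "1 \<le> i" "i + 2 \<le> j" "j \<le> n" "\<not> (i = 1 \<and> j = n)"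
proof -
  show "1 \<le> i" "j \<le> n"
    using assms by (simp_all add: is_diag_def)
  have "j \<noteq> i + 1"
    using assms by (auto simp: is_diag_def)
  then show "i + 2 \<le> j"
    using assms by (simp add: is_diag_def)
  show "\<not> (i = 1 \<and> j = n)"
  proof
    assume "i = 1 \<and> j = n"
    moreover from this have "1 < n"
      using assms by (simp add: is_diag_def)
    ultimately have "(j + 1) mod n = i mod n"
      by (simp add: mod_Suc)
    then show False
      using assms by (simp add: is_diag_def)
  qed
qed

lemma pairing_vertex_pos_if_swaps:
  assumes ij: "is_diag n i j" and ab: "is_diag n a b" and "swaps n i j a b"
    and c: "in_XQ n (vertex n) c" "\<forall>k\<in>{1..n} - {a, b}. c k < 0" "c b + c (b - 1) \<le> 0"
  shows "0 < pairing n (vertex n) i j c"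
proof -
  note ij_bounds = is_diag_bounds[OF ij] and ab_bounds = is_diag_bounds[OF ab]
  have ccw: "ccw_polygon n (vertex n)"
    by (rule ccw_polygon_vertex)
  have "\<not> crosses i j a b \<or> (a < i \<and> i < b - 1 \<and> b < j \<and> j < n)"
    using \<open>swaps n i j a b\<close> unfolding swaps_def by auto
  moreover have "i \<le> a \<and> b \<le> j \<or> \<not> (i < a \<and> a < j) \<and> \<not> (i < b \<and> b < j)"
    if "\<not> crosses i j a b"
    using that ab_bounds unfolding crosses_def by auto
  ultimately consider "a < i" "i < b - 1" "b < j" "j < n"
    | "\<not> (i < a \<and> a < j)" "\<not> (i < b \<and> b < j)"
    | "i \<le> a" "b \<le> j"
    by blast
  then show ?thesis
  proof cases
    case 1
    have "orient (vertex n i) (vertex n j) (vertex n (b - 1)) < orient (vertex n i) (vertex n j) (vertex n b)"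
      using orient_vertex_antimono_inner[of i b j n] 1 ij_bounds
        orient_swap[of "vertex n i" "vertex n j"] by simp
    moreover have "c k < 0" if "i < k" "k < j" "k \<noteq> b" for k
      using c(2) that 1 ab_bounds by simp
    ultimately show ?thesis
      using pairing_pos_crossing[OF ccw, of i b j c] 1 ij_bounds c(3) by simp
  next
    case 2
    then have "c k < 0" if "i < k" "k < j" for k
      using c(2) that ij_bounds by auto
    then show ?thesis
      using pairing_pos_if_neg_between[OF ccw, of i j c] ij_bounds by simp
  next
    case 3
    then have "c k < 0" if "k \<in> {1..n}" "k < i \<or> j < k" for k
      using c(2) that ab_bounds by auto
    then show ?thesis
      using pairing_pos_if_neg_outside[OF ccw c(1), of i j] ij_bounds by simp
  qed
qed

theorem lemma3p2:
  fixes n :: nat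
  assumes "n \<ge> 4"
  shows "\<exists>p :: nat \<Rightarrow> real \<times> real. convex_ngon n p \<and>
           (\<exists>x :: nat \<Rightarrow> nat \<Rightarrow> nat \<Rightarrow> real.
              (\<forall>i j. is_diag n i j \<longrightarrow> in_XQ n p (x i j)) \<and>
              (\<forall>i j i' j'. is_diag n i j \<longrightarrow> is_diag n i' j' \<longrightarrow> swaps n i j i' j' \<longrightarrow>
                  pairing n p i j (x i' j') > 0))"
proof -
  define x where "x a b = (SOME c. in_XQ n (vertex n) c \<and> (\<forall>k\<in>{1..n} - {a, b}. c k < 0)
    \<and> c b + c (b - 1) \<le> 0)" for a b
  have x: "in_XQ n (vertex n) (x a b) \<and> (\<forall>k\<in>{1..n} - {a, b}. x a b k < 0)
      \<and> x a b b + x a b (b - 1) \<le> 0" if "is_diag n a b" for a b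
    using separating_vector_exists[OF is_diag_bounds[OF that]] unfolding x_def by (rule someI_ex)
  show ?thesis
  proof (intro exI[of _ "vertex n"] exI[of _ x] conjI allI impI)
    show "convex_ngon n (vertex n)"
      by (rule convex_ngon_if_ccw[OF ccw_polygon_vertex])
    show "in_XQ n (vertex n) (x i j)" if "is_diag n i j" for i j
      using x[OF that] by blast
    show "0 < pairing n (vertex n) i j (x a b)"
      if "is_diag n i j" "is_diag n a b" "swaps n i j a b" for i j a b
      using pairing_vertex_pos_if_swaps[OF that] x[OF that(2)] by blast
  qed
qed

end
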